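(* For all integers $k\ge2$, $$[t^{2k-3}]\frac{(1-t^2)^{k-2}(1+t)^2}{1+t+t^2}=2(-\sqrt3)^{k-3}\sin\!\Bigl(\frac{(k-4)\pi}{6}\Bigr).$$
   Context: $[t^m]F(t)$ denotes the coefficient of $t^m$ in the formal power series $F(t)$. *)

theory Defs
  imports "HOL-Analysis.Analysis" "HOL-Computational_Algebra.Formal_Power_Series"
begin

end

theory Submission
  imports Defs
begin

text \<open>
  The series 1/(1+t+t^2) = (1-t)/(1-t^3) has 3-periodic coefficients c_m with
  c_m + c_(m-1) + c_(m-2) = 0. Hence if P = Q (1+t+t^2) + \<alpha> + \<beta> t, the coefficient of t^m in
  P/(1+t+t^2) is \<alpha> c_m + \<beta> c_(m-1) as soon as m exceeds deg Q. For P = (1-t^2)^n (1+t)^2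
  the remainder is that of (2+t)^n t, and the coefficients a_n of t^(2n+1) satisfy
  a_(n+2) = -3 a_(n+1) - 3 a_n. The characteristic roots are -\<surd>3 e^(\<plusminus>i\<pi>/6), so the
  closed form satisfies the same recurrence, and both sequences start with 1, -1.
\<close>

definition cyc3_coeff :: "nat \<Rightarrow> 'a::comm_ring_1" where
  "cyc3_coeff m = (if m mod 3 = 0 then 1 else if m mod 3 = 1 then -1 else 0)"

lemma cyc3_coeff_add3: "cyc3_coeff (m + 3) = cyc3_coeff m"
  by (simp add: cyc3_coeff_def)

lemma cyc3_coeff_sum3: "cyc3_coeff (m + 2) + cyc3_coeff (m + 1) + cyc3_coeff m = (0 :: 'a::comm_ring_1)"
proof (induction m)
  case 0
  show ?case by (simp add: cyc3_coeff_def)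
next
  case (Suc m)
  have "cyc3_coeff (Suc m + 2) = (cyc3_coeff m :: 'a)"
    using cyc3_coeff_add3[of m] by (simp add: numeral_3_eq_3)
  with Suc.IH show ?case by (simp add: algebra_simps)
qed

lemma cyc3_coeff_rec: "cyc3_coeff (m + 2) = - cyc3_coeff (m + 1) - (cyc3_coeff m :: 'a::comm_ring_1)"
  using cyc3_coeff_sum3[of m] by (simp add: eq_neg_iff_add_eq_0 algebra_simps)

lemma fps_cyc3_mult: "(1 + fps_X + fps_X\<^sup>2) * Abs_fps cyc3_coeff = (1 :: 'a::comm_ring_1 fps)"
proof (rule fps_ext)
  fix m
  have "fps_nth ((1 + fps_X + fps_X\<^sup>2) * Abs_fps cyc3_coeff) m
      = cyc3_coeff m + (if m = 0 then 0 else cyc3_coeff (m - 1))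
        + (if m < 2 then 0 else cyc3_coeff (m - 2) :: 'a)"
    by (simp add: distrib_right fps_X_mult_nth fps_X_power_mult_nth)
  also have "\<dots> = fps_nth 1 m"
  proof (cases "m < 2")
    case True
    then show ?thesis by (cases m) (auto simp: cyc3_coeff_def)
  next
    case False
    then obtain j where "m = j + 2" by (metis add.commute le_add_diff_inverse not_less)
    then show ?thesis using cyc3_coeff_sum3[of j] by simp
  qed
  finally show "fps_nth ((1 + fps_X + fps_X\<^sup>2) * Abs_fps cyc3_coeff) m = fps_nth (1 :: 'a fps) m" .
qed

lemma fps_divide_cyc3: "A / (1 + fps_X + fps_X\<^sup>2) = A * Abs_fps (cyc3_coeff :: nat \<Rightarrow> 'a::field)"
proof -
  have "inverse (1 + fps_X + fps_X\<^sup>2 :: 'a fps) = Abs_fps cyc3_coeff"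
    by (rule fps_inverse_unique[OF fps_cyc3_mult])
  then show ?thesis by (simp add: fps_divide_unit)
qed

text \<open>\<open>cyc3_rem n = (\<alpha>, \<beta>)\<close> where \<open>\<alpha> + \<beta> t\<close> is the remainder of \<open>(1-t\<^sup>2)\<^sup>n(1+t)\<^sup>2\<close> modulo
  \<open>1+t+t\<^sup>2\<close>; modulo that polynomial \<open>1-t\<^sup>2 \<equiv> 2+t\<close> and \<open>(1+t)\<^sup>2 \<equiv> t\<close>.\<close>
fun cyc3_rem :: "nat \<Rightarrow> 'a::comm_ring_1 \<times> 'a" where
  "cyc3_rem 0 = (0, 1)"
| "cyc3_rem (Suc n) = (2 * fst (cyc3_rem n) - snd (cyc3_rem n), fst (cyc3_rem n) + snd (cyc3_rem n))"

lemma fps_nth_cyc3_tail: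
  fixes n m :: nat
  assumes "2 * n + 1 \<le> m"
  shows "fps_nth ((1 - fps_X\<^sup>2) ^ n * (1 + fps_X)\<^sup>2 * Abs_fps cyc3_coeff :: 'a::comm_ring_1 fps) m
       = fst (cyc3_rem n) * cyc3_coeff m + snd (cyc3_rem n) * cyc3_coeff (m - 1)"
  using assms
proof (induction n arbitrary: m)
  case 0
  have "(1 + fps_X)\<^sup>2 * Abs_fps cyc3_coeff
      = (1 + fps_X + fps_X\<^sup>2) * Abs_fps cyc3_coeff + fps_X * (Abs_fps cyc3_coeff :: 'a fps)"
    by (simp add: power2_eq_square algebra_simps)
  also have "\<dots> = 1 + fps_X * Abs_fps cyc3_coeff" by (simp add: fps_cyc3_mult)
  finally show ?case using "0.prems" by simp
next
  case (Suc n)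
  define E :: "'a fps" where "E = (1 - fps_X\<^sup>2) ^ n * (1 + fps_X)\<^sup>2 * Abs_fps cyc3_coeff"
  obtain j where m: "m = j + 3"
    using Suc.prems le_Suc_ex[of 3 m] by (auto simp: add.commute)
  have "fps_nth ((1 - fps_X\<^sup>2) ^ Suc n * (1 + fps_X)\<^sup>2 * Abs_fps cyc3_coeff) m
      = fps_nth E m - fps_nth (fps_X\<^sup>2 * E) m"
    by (simp add: E_def algebra_simps)
  also have "\<dots> = fps_nth E (j + 3) - fps_nth E (j + 1)"
    by (simp add: fps_X_power_mult_nth m)
  also have "\<dots> = fst (cyc3_rem (Suc n)) * cyc3_coeff m + snd (cyc3_rem (Suc n)) * cyc3_coeff (m - 1)"
    using Suc.prems Suc.IH[of "j + 3"] Suc.IH[of "j + 1"]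
    by (simp add: E_def m cyc3_coeff_add3 cyc3_coeff_rec[of j, simplified] algebra_simps)
  finally show ?case .
qed

definition cyc3_diag :: "nat \<Rightarrow> 'a::comm_ring_1" where
  "cyc3_diag n = fst (cyc3_rem n) * cyc3_coeff (2 * n + 1) + snd (cyc3_rem n) * cyc3_coeff (2 * n)"

lemma cyc3_diag_rec: "cyc3_diag (n + 2) = -3 * cyc3_diag (n + 1) - 3 * (cyc3_diag n :: 'a::comm_ring_1)"
proof -
  have rem: "cyc3_rem (n + 1) = (2 * fst (cyc3_rem n) - snd (cyc3_rem n), fst (cyc3_rem n) + snd (cyc3_rem n))"
    "cyc3_rem (n + 2) = (3 * fst (cyc3_rem n) - 3 * snd (cyc3_rem n), 3 * (fst (cyc3_rem n) :: 'a))"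
    by (simp_all add: numeral_2_eq_2 algebra_simps)
  have c2: "cyc3_coeff (2 * n + 2) = - cyc3_coeff (2 * n + 1) - (cyc3_coeff (2 * n) :: 'a)"
    by (rule cyc3_coeff_rec)
  have shift: "cyc3_coeff i = (cyc3_coeff j :: 'a)" if "i = j + 3" for i j
    using that by (simp add: cyc3_coeff_add3)
  have "2 * (n + 1) = 2 * n + 2" by simp
  then have e1: "cyc3_coeff (2 * (n + 1)) = - cyc3_coeff (2 * n + 1) - (cyc3_coeff (2 * n) :: 'a)"
    using c2 by simp
  have e2: "cyc3_coeff (2 * (n + 1) + 1) = (cyc3_coeff (2 * n) :: 'a)"
    by (rule shift) simp
  have e3: "cyc3_coeff (2 * (n + 2)) = (cyc3_coeff (2 * n + 1) :: 'a)"
    by (rule shift) simp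
  have e4: "cyc3_coeff (2 * (n + 2) + 1) = - cyc3_coeff (2 * n + 1) - (cyc3_coeff (2 * n) :: 'a)"
    using shift[of "2 * (n + 2) + 1" "2 * n + 2"] c2 by simp
  show ?thesis unfolding cyc3_diag_def rem e1 e2 e3 e4 by (simp add: algebra_simps)
qed

lemma sin_add_double: "sin (x + 2 * t) = 2 * cos t * sin (x + t) - sin (x :: real)"
  using sin_plus_sin[of "x + 2 * t" x] by (simp add: add_divide_distrib algebra_simps)

lemma power_int_sin_rec:
  fixes r t \<phi> :: real and e :: int
  assumes "r \<noteq> 0"
  defines "f \<equiv> \<lambda>n::nat. r powi (int n + e) * sin (real n * t + \<phi>)"
  shows "f (n + 2) = 2 * r * cos t * f (n + 1) - r\<^sup>2 * f n"
proof -
  have pow: "r powi (int (n + 1) + e) = r * r powi (int n + e)"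
            "r powi (int (n + 2) + e) = r\<^sup>2 * r powi (int n + e)"
    using assms(1) by (simp_all add: power_int_add add_ac)
  have "sin (real (n + 2) * t + \<phi>) = 2 * cos t * sin (real (n + 1) * t + \<phi>) - sin (real n * t + \<phi>)"
    using sin_add_double[of "real n * t + \<phi>" t] by (simp add: algebra_simps)
  then have "f (n + 2) = r\<^sup>2 * r powi (int n + e)
      * (2 * cos t * sin (real (n + 1) * t + \<phi>) - sin (real n * t + \<phi>))"
    unfolding f_def pow by simp
  also have "\<dots> = 2 * r * cos t * f (n + 1) - r\<^sup>2 * f n"
    unfolding f_def pow by (simp add: power2_eq_square algebra_simps)
  finally show ?thesis .
qed

lemma linear_recurrence2_unique:
  fixes f g :: "nat \<Rightarrow> 'a::{minus,times}"
  assumes "\<And>n. f (n + 2) = a * f (n + 1) - b * f n"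
      and "\<And>n. g (n + 2) = a * g (n + 1) - b * g n"
      and "f 0 = g 0" and "f 1 = g 1"
  shows "f n = g n"
proof -
  have "f n = g n \<and> f (Suc n) = g (Suc n)"
  proof (induction n)
    case 0
    show ?case using assms(3,4) by simp
  next
    case (Suc n)
    then show ?case using assms(1,2)[of n] by simp
  qed
  then show ?thesis ..
qed

theorem lemma7:
  fixes k :: nat
  assumes "k \<ge> 2"
  shows "fps_nth ((1 - fps_X\<^sup>2) ^ (k - 2) * (1 + fps_X)\<^sup>2 / (1 + fps_X + fps_X\<^sup>2) :: real fps) (2 * k - 3)
         = 2 * (- sqrt 3) powi (int k - 3) * sin ((real k - 4) * pi / 6)"
proof -
  obtain n where k: "k = n + 2" using assms by (metis le_add_diff_inverse2)
  define closed :: "nat \<Rightarrow> real"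
    where "closed m = 2 * ((- sqrt 3) powi (int m - 1) * sin (real m * (pi / 6) - pi / 3))" for m
  have closed_rec: "closed (m + 2) = -3 * closed (m + 1) - 3 * closed m" for m
    using power_int_sin_rec[where r = "- sqrt 3" and t = "pi / 6" and \<phi> = "- pi / 3" and e = "-1" and n = m]
    by (simp add: closed_def cos_30 algebra_simps)
  have "closed 0 = 1" "closed 1 = -1"
    by (simp_all add: closed_def power_int_minus sin_30 sin_60 field_simps)
  then have diag: "cyc3_diag n = closed n"
    using linear_recurrence2_unique[OF cyc3_diag_rec closed_rec]
    by (simp add: cyc3_diag_def cyc3_coeff_def)
  have "2 * k - 3 = 2 * n + 1" using k by simp
  then have "fps_nth ((1 - fps_X\<^sup>2) ^ (k - 2) * (1 + fps_X)\<^sup>2 / (1 + fps_X + fps_X\<^sup>2) :: real fps) (2 * k - 3)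
      = cyc3_diag n"
    using fps_nth_cyc3_tail[of n "2 * n + 1"] by (simp add: k fps_divide_cyc3 cyc3_diag_def)
  also have "\<dots> = closed n" by (rule diag)
  also have "\<dots> = 2 * (- sqrt 3) powi (int k - 3) * sin ((real k - 4) * pi / 6)"
  proof -
    have "int k - 3 = int n - 1" "(real k - 4) * pi / 6 = real n * (pi / 6) - pi / 3"
      using k by (simp_all add: field_simps)
    then show ?thesis by (simp only: closed_def mult.assoc)
  qed
  finally show ?thesis .
qed

end
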